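(* Assume the setting in the context, fix $\beta>0$ and $u_0\in L^2(0,1)$, and consider the closed-loop solution $u$ with the event-triggered boundary control. Let $N\ge1$ be an integer and set, with $\phi_n(x)=\sqrt2\sin(n\pi x)$, $k_n:=\int_0^1 k(y)\phi_n(y)\,dy$, $\lambda_n:=n^2\pi^2\theta-\lambda$, $$g:=\sum_{n=1}^N k_n\phi_n,\qquad F_N:=\sum_{n=1}^N\Big|k_n\phi_n'(1)\Big|,\qquad G_N:=\sum_{n=1}^N|k_n\lambda_n|.$$ Then for every event index $j\ge0$ and every $t\in[t_j,t_{j+1})$ (with $t$ finite), $$|d(t)|\le (t-t_j)\,\theta\|k\|\,F_N\,\|u[t_j]\|+(t-t_j)\,G_N\sup_{t_j\le s\le t}\|u[s]\|+\|k-g\|\,\|u[t_j]\|+\|k-g\|\,\|u[t]\|.$$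
   Context: Standing setting. Fix $\theta>0$, $\lambda\in\mathbb{R}$ with $\lambda\ge\theta\pi^2$, and a design parameter $c\ge0$; set $\kappa:=(\lambda+c)/\theta>0$. Define the kernel on $\{0\le y\le x\le1\}$ by $K(x,y)=-y\kappa\,\frac{I_1(\sqrt{\kappa(x^2-y^2)})}{\sqrt{\kappa(x^2-y^2)}}$ (extended continuously to $y=x$ by the value $-y\kappa/2$), where $I_1$ is the modified Bessel function of the first kind of order 1, and let $k(y):=K(1,y)$, $y\in[0,1]$. $\|\cdot\|$ is the $L^2(0,1)$ norm and $u[t]$ denotes $x\mapsto u(t,x)$. The closed-loop system is $u_t=\theta u_{xx}+\lambda u$ on $(0,1)$, $u(t,0)=0$, $u(t,1)=U_d(t)$, $u[0]=u_0\in L^2(0,1)$, under the event-triggered boundary control with parameter $\beta>0$ defined as follows. Set $t_0=0$. Given an event time $t_j$ and $u[t_j]$, let $u$ on $[t_j,\infty)$ be the (unique) solution with held boundary value $U_d(t)=\int_0^1k(y)u(t_j,y)\,dy$, where solution means: $t\mapsto u[t]$ continuous into $L^2(0,1)$ on $[t_j,\infty)$, $u\in C^1$ on $(t_j,\infty)\times[0,1]$, $u[t]\in C^2([0,1])$ for $t>t_j$, PDE and boundary conditions holding pointwise. Let $d(t):=\int_0^1k(y)\big(u(t_j,y)-u(t,y)\big)dy$ and $S_j:=\{t>t_j:\ |d(t)|>\beta\|k\|\,\|u[t]\|+\beta\|k\|\,\|u[t_j]\|\}$. If $S_j=\emptyset$ there are no further events ($t_{j+1}:=+\infty$); otherwise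 $t_{j+1}:=\inf S_j$, the control is $U_d(t)=\int_0^1k(y)u(t_j,y)dy$ for $t\in[t_j,t_{j+1})$, and the construction is repeated from $t_{j+1}$. *)

theory Defs
  imports "HOL-Analysis.Analysis"
begin

definition besselI1 :: "real \<Rightarrow> real" where
  "besselI1 z = (\<Sum>m. (z / 2) ^ (2 * m + 1) / (fact m * fact (m + 1)))"

definition kappa :: "real \<Rightarrow> real \<Rightarrow> real \<Rightarrow> real" where
  "kappa \<theta> lmb c = (lmb + c) / \<theta>"

text \<open>K(x,y) on 0 <= y <= x <= 1, continuously extended by -y*kappa/2 on the diagonal.\<close>
definition kernelK :: "real \<Rightarrow> real \<Rightarrow> real \<Rightarrow> real \<Rightarrow> real \<Rightarrow> real" where
  "kernelK \<theta> lmb c x y =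
     (let \<kappa> = kappa \<theta> lmb c; s = sqrt (\<kappa> * (x\<^sup>2 - y\<^sup>2)) in
      if y = x then - y * \<kappa> / 2 else - y * \<kappa> * besselI1 s / s)"

definition kgain :: "real \<Rightarrow> real \<Rightarrow> real \<Rightarrow> real \<Rightarrow> real" where
  "kgain \<theta> lmb c y = kernelK \<theta> lmb c 1 y"

definition sq_int :: "(real \<Rightarrow> real) \<Rightarrow> bool" where
  "sq_int f \<longleftrightarrow> f measurable_on {0..1} \<and> (\<lambda>x. (f x)\<^sup>2) integrable_on {0..1}"

definition l2norm :: "(real \<Rightarrow> real) \<Rightarrow> real" where
  "l2norm f = sqrt (integral {0..1} (\<lambda>x. (f x)\<^sup>2))"

text \<open>w solves u_t = theta u_xx + lambda u on (0,1), u(t,0)=0, u(t,1)=U on [a,oo):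
  t -> w t continuous into L^2 on [a,oo); w is C^1 on (a,oo) x [0,1];
  w t in C^2([0,1]) for t > a; PDE and boundary conditions pointwise.
  The initial datum is imposed separately.\<close>
definition heat_sol ::
  "real \<Rightarrow> real \<Rightarrow> real \<Rightarrow> real \<Rightarrow> (real \<Rightarrow> real \<Rightarrow> real) \<Rightarrow> bool" where
  "heat_sol \<theta> lmb a U w \<longleftrightarrow>
     (\<forall>t\<ge>a. sq_int (w t)) \<and>
     (\<forall>s\<ge>a. ((\<lambda>t. l2norm (\<lambda>x. w t x - w s x)) \<longlongrightarrow> 0) (at s within {a..})) \<and>
     (\<exists>wt wx wxx.
        continuous_on ({a<..} \<times> {0..1}) (\<lambda>p. wt (fst p) (snd p)) \<and>
        continuous_on ({a<..} \<times> {0..1}) (\<lambda>p. wx (fst p) (snd p)) \<and>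
        (\<forall>t>a. \<forall>x\<in>{0..1}. ((\<lambda>s. w s x) has_real_derivative wt t x) (at t)) \<and>
        (\<forall>t>a. \<forall>x\<in>{0..1}. (w t has_real_derivative wx t x) (at x within {0..1})) \<and>
        (\<forall>t>a. \<forall>x\<in>{0..1}. (wx t has_real_derivative wxx t x) (at x within {0..1})) \<and>
        (\<forall>t>a. continuous_on {0..1} (wxx t)) \<and>
        (\<forall>t>a. \<forall>x\<in>{0<..<1}. wt t x = \<theta> * wxx t x + lmb * w t x) \<and>
        (\<forall>t>a. w t 0 = 0 \<and> w t 1 = U))"

text \<open>te j are the event times (te j = \<infinity> means: no j-th event).  w j is the solution
  on [t_j, oo) with held boundary value; u coincides with w j on [t_j, t_{j+1}).\<close>
definition closed_loop ::
  "real \<Rightarrow> real \<Rightarrow> real \<Rightarrow> real \<Rightarrow> (real \<Rightarrow> real) \<Rightarrow> (real \<Rightarrow> real \<Rightarrow> real)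
   \<Rightarrow> (nat \<Rightarrow> ereal) \<Rightarrow> bool" where
  "closed_loop \<theta> lmb c \<beta> u0 u te \<longleftrightarrow>
     te 0 = 0 \<and> (\<forall>j. te j = \<infinity> \<longrightarrow> te (Suc j) = \<infinity>) \<and>
     (\<exists>w :: nat \<Rightarrow> real \<Rightarrow> real \<Rightarrow> real.
        w 0 0 = u0 \<and>
        (\<forall>j. te j \<noteq> \<infinity> \<longrightarrow>
           (let a = real_of_ereal (te j);
                k = kgain \<theta> lmb c;
                U = integral {0..1} (\<lambda>y. k y * w j a y);
                S = {t. t > a \<and>
                        \<bar>integral {0..1} (\<lambda>y. k y * (w j a y - w j t y))\<bar>
                          > \<beta> * l2norm k * l2norm (w j t) + \<beta> * l2norm k * l2norm (w j a)}
            in heat_sol \<theta> lmb a U (w j) \<and>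
               (S = {} \<longrightarrow> te (Suc j) = \<infinity>) \<and>
               (S \<noteq> {} \<longrightarrow> te (Suc j) = ereal (Inf S)) \<and>
               (\<forall>t. ereal a \<le> ereal t \<and> ereal t < te (Suc j) \<longrightarrow> u t = w j t) \<and>
               (te (Suc j) \<noteq> \<infinity> \<longrightarrow>
                  w (Suc j) (real_of_ereal (te (Suc j))) = w j (real_of_ereal (te (Suc j)))))))"

definition phi :: "nat \<Rightarrow> real \<Rightarrow> real" where
  "phi n x = sqrt 2 * sin (real n * pi * x)"

definition kcoef :: "real \<Rightarrow> real \<Rightarrow> real \<Rightarrow> nat \<Rightarrow> real" where
  "kcoef \<theta> lmb c n = integral {0..1} (\<lambda>y. kgain \<theta> lmb c y * phi n y)"

definition lam :: "real \<Rightarrow> real \<Rightarrow> nat \<Rightarrow> real" where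
  "lam \<theta> lmb n = (real n)\<^sup>2 * pi\<^sup>2 * \<theta> - lmb"

definition gN :: "real \<Rightarrow> real \<Rightarrow> real \<Rightarrow> nat \<Rightarrow> real \<Rightarrow> real" where
  "gN \<theta> lmb c N y = (\<Sum>n=1..N. kcoef \<theta> lmb c n * phi n y)"

definition FN :: "real \<Rightarrow> real \<Rightarrow> real \<Rightarrow> nat \<Rightarrow> real" where
  "FN \<theta> lmb c N = (\<Sum>n=1..N. \<bar>kcoef \<theta> lmb c n * deriv (phi n) 1\<bar>)"

definition GN :: "real \<Rightarrow> real \<Rightarrow> real \<Rightarrow> nat \<Rightarrow> real" where
  "GN \<theta> lmb c N = (\<Sum>n=1..N. \<bar>kcoef \<theta> lmb c n * lam \<theta> lmb n\<bar>)"

end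

theory Submission
  imports Defs
begin

text \<open>Let \<open>w\<close> be the solution on \<open>[t\<^sub>j, \<infinity>)\<close> with held boundary value \<open>U\<close>, and
  \<open>c\<^sub>n(s) = \<langle>\<phi>\<^sub>n, w(s)\<rangle>\<close> its sine coefficients. Integrating by parts twice against \<open>\<phi>\<^sub>n\<close>
  (which vanishes at both ends, while \<open>w(s, 0) = 0\<close> and \<open>w(s, 1) = U\<close>) gives
  \<open>c\<^sub>n' = -\<theta> \<phi>\<^sub>n'(1) U - \<lambda>\<^sub>n c\<^sub>n\<close>, so by the mean value theorem
  \<open>|c\<^sub>n(t) - c\<^sub>n(t\<^sub>j)| \<le> (t - t\<^sub>j) (\<theta> |\<phi>\<^sub>n'(1) U| + |\<lambda>\<^sub>n| sup \<parallel>w\<parallel>)\<close>, using \<open>|c\<^sub>n| \<le> \<parallel>w\<parallel>\<close>.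
  Splitting \<open>k = g + (k - g)\<close>, the part \<open>\<langle>g, w(t\<^sub>j) - w(t)\<rangle> = \<Sum> k\<^sub>n (c\<^sub>n(t\<^sub>j) - c\<^sub>n(t))\<close> is
  bounded by these estimates, the tail by Cauchy-Schwarz, and finally
  \<open>|U| = |\<langle>k, w(t\<^sub>j)\<rangle>| \<le> \<parallel>k\<parallel> \<parallel>w(t\<^sub>j)\<parallel>\<close>.\<close>

lemma integrable_on_mult_left_real:
  "f integrable_on S \<Longrightarrow> (\<lambda>x. c * f x :: real) integrable_on S"
  using integrable_on_cmult_left[of f S c] by simp

lemma sq_int_continuous: "continuous_on {0..1} f \<Longrightarrow> sq_int f"
  unfolding sq_int_def
  by (auto simp: measurable_on_iff_borel_measurable intro!: continuous_imp_measurable_on_sets_lebesgue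
      integrable_continuous_real continuous_intros)

lemma integrable_mult_sq_int:
  assumes "sq_int f" "sq_int g"
  shows "(\<lambda>x. f x * g x) integrable_on {0..1}"
proof (rule measurable_bounded_by_integrable_imp_integrable_real)
  show "(\<lambda>x. f x * g x) \<in> borel_measurable (lebesgue_on {0..1})"
    using assms measurable_on_bilinear[OF bilinear_times, of f "{0..1}" g]
    by (simp add: sq_int_def measurable_on_iff_borel_measurable)
  show "(\<lambda>x. (1/2) * (f x)\<^sup>2 + (1/2) * (g x)\<^sup>2) integrable_on {0..1}"
    using assms unfolding sq_int_def by (auto intro!: integrable_add integrable_on_mult_left_real)
  show "\<bar>f x * g x\<bar> \<le> (1/2) * (f x)\<^sup>2 + (1/2) * (g x)\<^sup>2" for x
  proof -
    have "0 \<le> (\<bar>f x\<bar> - \<bar>g x\<bar>)\<^sup>2" by simp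
    then show ?thesis by (simp add: power2_eq_square abs_mult algebra_simps)
  qed
qed auto

lemma sq_int_scale: "sq_int f \<Longrightarrow> sq_int (\<lambda>x. r * f x)"
  unfolding sq_int_def
  by (auto simp: power_mult_distrib intro: measurable_on_cmul integrable_on_mult_left_real)

lemma sq_int_add:
  assumes "sq_int f" "sq_int g"
  shows "sq_int (\<lambda>x. f x + g x)"
  unfolding sq_int_def
proof
  show "(\<lambda>x. f x + g x) measurable_on {0..1}"
    using assms by (auto simp: sq_int_def intro: measurable_on_add)
  have "(\<lambda>x. (f x)\<^sup>2 + 2 * (f x * g x) + (g x)\<^sup>2) integrable_on {0..1}"
    using assms integrable_mult_sq_int[OF assms]
    by (intro integrable_add integrable_on_mult_left_real) (auto simp: sq_int_def)
  then show "(\<lambda>x. (f x + g x)\<^sup>2) integrable_on {0..1}"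
    by (simp add: power2_sum algebra_simps)
qed

lemma sq_int_diff: "sq_int f \<Longrightarrow> sq_int g \<Longrightarrow> sq_int (\<lambda>x. f x - g x)"
  using sq_int_add[of f "\<lambda>x. (- 1) * g x"] sq_int_scale[of g "- 1"] by simp

lemma integral_square_add_scaled:
  assumes "sq_int f" "sq_int g"
  shows "integral {0..1} (\<lambda>x. (f x + r * g x)\<^sup>2) =
    integral {0..1} (\<lambda>x. (f x)\<^sup>2) + 2 * r * integral {0..1} (\<lambda>x. f x * g x)
     + r\<^sup>2 * integral {0..1} (\<lambda>x. (g x)\<^sup>2)"
proof -
  have "integral {0..1} (\<lambda>x. (f x + r * g x)\<^sup>2) =
     integral {0..1} (\<lambda>x. (f x)\<^sup>2 + (2 * r) * (f x * g x) + r\<^sup>2 * (g x)\<^sup>2)"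
    by (simp add: power2_eq_square algebra_simps)
  also have "\<dots> = integral {0..1} (\<lambda>x. (f x)\<^sup>2) + integral {0..1} (\<lambda>x. (2 * r) * (f x * g x))
      + integral {0..1} (\<lambda>x. r\<^sup>2 * (g x)\<^sup>2)"
    using assms integrable_mult_sq_int[OF assms] unfolding sq_int_def
    by (intro integral_add[THEN trans] arg_cong2[where f = "(+)"] integral_add
        integrable_add integrable_on_mult_left_real) auto
  finally show ?thesis by simp
qed

lemma quadratic_nonneg_imp_discrim_le:
  fixes A B C :: real
  assumes nonneg: "\<And>r. 0 \<le> A + 2 * r * B + r\<^sup>2 * C" and "0 \<le> C"
  shows "B\<^sup>2 \<le> A * C"
proof (cases "C = 0")
  case True
  have "B = 0"
  proof (rule ccontr)
    assume "B \<noteq> 0"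
    then have "2 * (- (\<bar>A\<bar> + 1) / (2 * B)) * B = - (\<bar>A\<bar> + 1)"
      by (simp add: field_simps)
    then show False
      using nonneg[of "- (\<bar>A\<bar> + 1) / (2 * B)"] True by simp
  qed
  with True show ?thesis by simp
next
  case False
  with \<open>0 \<le> C\<close> have "0 < C" by simp
  have "0 \<le> A + 2 * (- B / C) * B + (- B / C)\<^sup>2 * C"
    by (rule nonneg)
  then have "0 \<le> (A + 2 * (- B / C) * B + (- B / C)\<^sup>2 * C) * C"
    using \<open>0 < C\<close> by simp
  also have "\<dots> = A * C - B\<^sup>2"
    using \<open>0 < C\<close> by (simp add: field_simps power2_eq_square)
  finally show ?thesis by simp
qed

lemma l2norm_nonneg: "0 \<le> l2norm f"
  unfolding l2norm_def
  by (cases "(\<lambda>x. (f x)\<^sup>2) integrable_on {0..1}") (auto simp: integral_nonneg not_integrable_integral)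

lemma integral_square_nonneg:
  fixes f :: "real \<Rightarrow> real"
  shows "0 \<le> integral {0..1} (\<lambda>x. (f x)\<^sup>2)"
  by (cases "(\<lambda>x. (f x)\<^sup>2) integrable_on {0..1}") (auto simp: integral_nonneg not_integrable_integral)

lemma abs_integral_mult_le_l2norm:
  assumes "sq_int f" "sq_int g"
  shows "\<bar>integral {0..1} (\<lambda>x. f x * g x)\<bar> \<le> l2norm f * l2norm g"
proof -
  have "(integral {0..1} (\<lambda>x. f x * g x))\<^sup>2
      \<le> integral {0..1} (\<lambda>x. (f x)\<^sup>2) * integral {0..1} (\<lambda>x. (g x)\<^sup>2)"
  proof (rule quadratic_nonneg_imp_discrim_le)
    fix r
    show "0 \<le> integral {0..1} (\<lambda>x. (f x)\<^sup>2) + 2 * r * integral {0..1} (\<lambda>x. f x * g x)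
        + r\<^sup>2 * integral {0..1} (\<lambda>x. (g x)\<^sup>2)"
      using integral_square_nonneg[of "\<lambda>x. f x + r * g x"]
      by (simp add: integral_square_add_scaled[OF assms])
  qed (rule integral_square_nonneg)
  then show ?thesis
    using real_sqrt_le_mono by (fastforce simp: l2norm_def real_sqrt_mult)
qed

lemma l2norm_add_le:
  assumes "sq_int f" "sq_int g"
  shows "l2norm (\<lambda>x. f x + g x) \<le> l2norm f + l2norm g"
proof -
  have "integral {0..1} (\<lambda>x. (f x + g x)\<^sup>2)
      = (l2norm f)\<^sup>2 + 2 * integral {0..1} (\<lambda>x. f x * g x) + (l2norm g)\<^sup>2"
    using integral_square_add_scaled[OF assms, of 1] by (simp add: l2norm_def integral_square_nonneg)
  also have "\<dots> \<le> (l2norm f + l2norm g)\<^sup>2"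
    using abs_integral_mult_le_l2norm[OF assms] by (simp add: power2_sum)
  finally show ?thesis
    unfolding l2norm_def[of "\<lambda>x. f x + g x"]
    by (intro real_le_lsqrt) (auto intro: add_nonneg_nonneg l2norm_nonneg)
qed

lemma abs_l2norm_diff_le:
  assumes "sq_int f" "sq_int g"
  shows "\<bar>l2norm f - l2norm g\<bar> \<le> l2norm (\<lambda>x. f x - g x)"
proof -
  have "l2norm f \<le> l2norm (\<lambda>x. f x - g x) + l2norm g"
    using l2norm_add_le[OF sq_int_diff[OF assms] assms(2)] by simp
  moreover have "l2norm g \<le> l2norm (\<lambda>x. g x - f x) + l2norm f"
    using l2norm_add_le[OF sq_int_diff[OF assms(2,1)] assms(1)] by simp
  moreover have "l2norm (\<lambda>x. g x - f x) = l2norm (\<lambda>x. f x - g x)"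
    by (simp add: l2norm_def power2_commute)
  ultimately show ?thesis by linarith
qed

text \<open>\<open>besselI1_ratio ((z/2)\<^sup>2) = I\<^sub>1(z)/z\<close> is entire; it removes the apparent singularity of the
  kernel at \<open>y = 1\<close>, where \<open>sqrt (\<kappa> * (1 - y\<^sup>2))\<close> vanishes.\<close>
definition besselI1_ratio :: "real \<Rightarrow> real" where
  "besselI1_ratio x = (\<Sum>m. 1 / (2 * fact m * fact (m + 1)) * x ^ m)"

lemma summable_besselI1_ratio: "summable (\<lambda>m. 1 / (2 * fact m * fact (m + 1)) * x ^ m :: real)"
proof (rule summable_comparison_test')
  show "summable (\<lambda>m. \<bar>x\<bar> ^ m /\<^sub>R fact m)"
    by (rule summable_exp_generic)
  fix m :: nat
  have "(1 :: real) \<le> 2 * fact (m + 1)"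
    using fact_ge_1[of "m + 1", where 'a = real] by linarith
  then have "fact m * 1 \<le> fact m * (2 * (fact (m + 1) :: real))"
    by (intro mult_left_mono) auto
  have "norm (1 / (2 * fact m * fact (m + 1)) * x ^ m) = \<bar>x\<bar> ^ m / (2 * fact m * fact (m + 1))"
    by (simp add: abs_mult power_abs)
  also have "\<dots> \<le> \<bar>x\<bar> ^ m / fact m"
    using \<open>fact m * 1 \<le> _\<close> by (intro divide_left_mono) (auto simp: mult_ac)
  also have "\<dots> = \<bar>x\<bar> ^ m /\<^sub>R fact m"
    by (simp add: divide_inverse_commute)
  finally show "norm (1 / (2 * fact m * fact (m + 1)) * x ^ m) \<le> \<bar>x\<bar> ^ m /\<^sub>R fact m" .
qed

lemma isCont_besselI1_ratio: "isCont besselI1_ratio x"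
  unfolding besselI1_ratio_def fun_eq_iff
  by (rule isCont_powser_converges_everywhere) (rule summable_besselI1_ratio)

lemma besselI1_ratio_zero: "besselI1_ratio 0 = 1 / 2"
  unfolding besselI1_ratio_def by (subst powser_zero) simp

lemma besselI1_eq_ratio: "besselI1 z = z * besselI1_ratio ((z / 2)\<^sup>2)"
proof -
  have "besselI1 z = (\<Sum>m. z * (1 / (2 * fact m * fact (m + 1)) * ((z / 2)\<^sup>2) ^ m))"
    unfolding besselI1_def
  proof (rule suminf_cong)
    fix m
    have "(z / 2) ^ (2 * m + 1) = z / 2 * ((z / 2)\<^sup>2) ^ m"
      by (simp add: power_mult[symmetric] mult.commute)
    moreover have "z / 2 * Q / (fact m * fact (m + 1)) = z * (1 / (2 * fact m * fact (m + 1)) * Q)"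
      for Q :: real
      by simp
    ultimately show "(z / 2) ^ (2 * m + 1) / (fact m * fact (m + 1))
        = z * (1 / (2 * fact m * fact (m + 1)) * ((z / 2)\<^sup>2) ^ m)"
      by (simp only:)
  qed
  also have "\<dots> = z * besselI1_ratio ((z / 2)\<^sup>2)"
    unfolding besselI1_ratio_def by (rule suminf_mult[OF summable_besselI1_ratio])
  finally show ?thesis .
qed

lemma kgain_eq_besselI1_ratio:
  assumes "0 < kappa \<theta> lmb c" and "y \<in> {0..1}"
  shows "kgain \<theta> lmb c y = - y * kappa \<theta> lmb c * besselI1_ratio (kappa \<theta> lmb c * (1 - y\<^sup>2) / 4)"
proof (cases "y = 1")
  case True
  then show ?thesis by (simp add: kgain_def kernelK_def besselI1_ratio_zero)
next
  case False
  define \<kappa> where "\<kappa> = kappa \<theta> lmb c"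
  define s where "s = sqrt (\<kappa> * (1 - y\<^sup>2))"
  have "y\<^sup>2 < 1"
    using False assms(2) by (simp add: power_less_one_iff)
  then have pos: "0 < \<kappa> * (1 - y\<^sup>2)"
    using assms(1) by (simp add: \<kappa>_def)
  then have "0 < s" and s_sq: "(s / 2)\<^sup>2 = \<kappa> * (1 - y\<^sup>2) / 4"
    by (simp_all add: s_def power_divide)
  then have "besselI1 s / s = besselI1_ratio (\<kappa> * (1 - y\<^sup>2) / 4)"
    unfolding besselI1_eq_ratio s_sq by simp
  then show ?thesis
    using False
    by (simp add: kgain_def kernelK_def Let_def \<kappa>_def[symmetric] s_def[symmetric]
        times_divide_eq_right[symmetric] del: times_divide_eq_right)
qed

lemma sq_int_kgain:
  assumes "0 < kappa \<theta> lmb c"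
  shows "sq_int (kgain \<theta> lmb c)"
proof (rule sq_int_continuous)
  have "continuous_on UNIV besselI1_ratio"
    by (simp add: continuous_at_imp_continuous_on isCont_besselI1_ratio)
  then have "continuous_on {0..1} (\<lambda>y. besselI1_ratio (kappa \<theta> lmb c * (1 - y\<^sup>2) / 4))"
    by (rule continuous_on_compose2) (auto intro!: continuous_intros)
  then have "continuous_on {0..1}
      (\<lambda>y. - y * kappa \<theta> lmb c * besselI1_ratio (kappa \<theta> lmb c * (1 - y\<^sup>2) / 4))"
    by (intro continuous_on_mult continuous_intros)
  then show "continuous_on {0..1} (kgain \<theta> lmb c)"
    by (rule continuous_on_eq) (simp add: kgain_eq_besselI1_ratio[OF assms])
qed

definition dphi :: "nat \<Rightarrow> real \<Rightarrow> real" where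
  "dphi n x = sqrt 2 * (real n * pi) * cos (real n * pi * x)"

lemma has_real_derivative_phi: "(phi n has_real_derivative dphi n x) (at x)"
  unfolding phi_def dphi_def by (auto intro!: derivative_eq_intros)

lemma has_real_derivative_dphi: "(dphi n has_real_derivative - (real n * pi)\<^sup>2 * phi n x) (at x)"
  unfolding phi_def dphi_def by (auto intro!: derivative_eq_intros simp: power2_eq_square)

lemma deriv_phi: "deriv (phi n) x = dphi n x"
  by (rule DERIV_imp_deriv[OF has_real_derivative_phi])

lemma phi_zero [simp]: "phi n 0 = 0" and phi_one [simp]: "phi n 1 = 0"
  by (simp_all add: phi_def)

lemma continuous_on_phi: "continuous_on S (phi n)"
  unfolding phi_def by (intro continuous_intros)

lemma sq_int_phi: "sq_int (phi n)"
  by (rule sq_int_continuous[OF continuous_on_phi])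

lemma l2norm_phi:
  assumes "1 \<le> n"
  shows "l2norm (phi n) = 1"
proof -
  define F where "F x = x - sin (2 * real n * pi * x) / (2 * real n * pi)" for x
  have "((\<lambda>x. (phi n x)\<^sup>2) has_integral F 1 - F 0) {0..1}"
  proof (rule fundamental_theorem_of_calculus)
    fix x :: real
    have "(F has_real_derivative 1 - cos (2 * real n * pi * x)) (at x)"
      unfolding F_def using assms by (auto intro!: derivative_eq_intros)
    moreover have "1 - cos (2 * real n * pi * x) = (phi n x)\<^sup>2"
      using cos_double_sin[of "real n * pi * x"] by (simp add: phi_def power_mult_distrib mult.assoc)
    ultimately show "(F has_vector_derivative (phi n x)\<^sup>2) (at x within {0..1})"
      by (simp add: has_real_derivative_iff_has_vector_derivative[symmetric] has_field_derivative_at_within)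
  qed simp
  moreover have "F 1 - F 0 = 1"
    using sin_npi[of "2 * n"] by (simp add: F_def mult.assoc)
  ultimately show ?thesis
    by (simp add: l2norm_def integral_unique)
qed

definition sine_coeff :: "(real \<Rightarrow> real) \<Rightarrow> nat \<Rightarrow> real" where
  "sine_coeff f n = integral {0..1} (\<lambda>x. phi n x * f x)"

lemma sine_coeff_diff:
  assumes "sq_int f" "sq_int g"
  shows "sine_coeff f n - sine_coeff g n = sine_coeff (\<lambda>x. f x - g x) n"
  unfolding sine_coeff_def
  using integral_diff[OF integrable_mult_sq_int[OF sq_int_phi assms(1)]
      integrable_mult_sq_int[OF sq_int_phi assms(2)]]
  by (simp add: right_diff_distrib)

lemma abs_sine_coeff_le: "sq_int f \<Longrightarrow> \<bar>sine_coeff f n\<bar> \<le> l2norm (phi n) * l2norm f"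
  unfolding sine_coeff_def by (rule abs_integral_mult_le_l2norm[OF sq_int_phi])

lemma integral_sine_sum_mult:
  assumes "sq_int f" and "finite A"
  shows "integral {0..1} (\<lambda>y. (\<Sum>n\<in>A. b n * phi n y) * f y) = (\<Sum>n\<in>A. b n * sine_coeff f n)"
proof -
  have "integral {0..1} (\<lambda>y. (\<Sum>n\<in>A. b n * phi n y) * f y)
      = integral {0..1} (\<lambda>y. \<Sum>n\<in>A. b n * (phi n y * f y))"
    by (simp add: sum_distrib_right mult.assoc)
  also have "\<dots> = (\<Sum>n\<in>A. integral {0..1} (\<lambda>y. b n * (phi n y * f y)))"
    using assms by (intro integral_sum integrable_on_mult_left_real integrable_mult_sq_int sq_int_phi)
  finally show ?thesis
    by (simp add: sine_coeff_def)
qed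

lemma integral_phi_mult_second_derivative:
  assumes w': "\<And>x. x \<in> {0..1} \<Longrightarrow> (w has_real_derivative w' x) (at x within {0..1})"
    and w'': "\<And>x. x \<in> {0..1} \<Longrightarrow> (w' has_real_derivative w'' x) (at x within {0..1})"
    and "continuous_on {0..1} w''" and "w 0 = 0"
  shows "integral {0..1} (\<lambda>x. phi n x * w'' x)
    = - dphi n 1 * w 1 - (real n * pi)\<^sup>2 * sine_coeff w n"
proof -
  define h where "h x = phi n x * w' x - dphi n x * w x" for x
  have int_w: "(\<lambda>x. phi n x * w x) integrable_on {0..1}"
    using w' by (intro integrable_continuous_real continuous_intros continuous_on_phi DERIV_continuous_on) auto
  have int_w'': "(\<lambda>x. phi n x * w'' x) integrable_on {0..1}"
    using assms(3) by (intro integrable_continuous_real continuous_intros continuous_on_phi)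
  have "((\<lambda>x. phi n x * w'' x + (real n * pi)\<^sup>2 * (phi n x * w x)) has_integral h 1 - h 0) {0..1}"
  proof (rule fundamental_theorem_of_calculus)
    fix x :: real
    assume x: "x \<in> {0..1}"
    have "(h has_real_derivative
        (dphi n x * w' x + w'' x * phi n x) - (- (real n * pi)\<^sup>2 * phi n x * w x + w' x * dphi n x))
        (at x within {0..1})"
      unfolding h_def
      by (intro DERIV_diff DERIV_mult has_field_derivative_at_within[OF has_real_derivative_phi]
          has_field_derivative_at_within[OF has_real_derivative_dphi] w' w'' x)
    then show "(h has_vector_derivative phi n x * w'' x + (real n * pi)\<^sup>2 * (phi n x * w x))
        (at x within {0..1})"
      unfolding has_real_derivative_iff_has_vector_derivative[symmetric]
      by (rule DERIV_cong) (simp add: algebra_simps)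
  qed simp
  then have "integral {0..1} (\<lambda>x. phi n x * w'' x + (real n * pi)\<^sup>2 * (phi n x * w x)) = h 1 - h 0"
    by (rule integral_unique)
  then have "integral {0..1} (\<lambda>x. phi n x * w'' x) + (real n * pi)\<^sup>2 * sine_coeff w n = h 1 - h 0"
    using int_w int_w'' by (simp add: integral_add integrable_on_mult_left_real sine_coeff_def)
  then show ?thesis
    using \<open>w 0 = 0\<close> by (simp add: h_def)
qed

lemma heat_sol_sq_int: "heat_sol \<theta> lmb a U w \<Longrightarrow> a \<le> s \<Longrightarrow> sq_int (w s)"
  unfolding heat_sol_def by blast

lemma heat_sol_tendsto_L2:
  "heat_sol \<theta> lmb a U w \<Longrightarrow> a \<le> s \<Longrightarrow>
    ((\<lambda>r. l2norm (\<lambda>x. w r x - w s x)) \<longlongrightarrow> 0) (at s within {a..})"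
  unfolding heat_sol_def by blast

lemma continuous_on_heat_sol_functional:
  assumes hs: "heat_sol \<theta> lmb a U w"
    and lipschitz: "\<And>f g. sq_int f \<Longrightarrow> sq_int g \<Longrightarrow> \<bar>F f - F g\<bar> \<le> L * l2norm (\<lambda>x. f x - g x)"
  shows "continuous_on {a..} (\<lambda>s. F (w s))"
  unfolding continuous_on_def
proof
  fix s :: real
  assume "s \<in> {a..}"
  have "\<forall>\<^sub>F r in at s within {a..}. r \<in> {a..}"
    by (simp add: eventually_at_filter)
  then have "\<forall>\<^sub>F r in at s within {a..}. norm (F (w r) - F (w s)) \<le> L * l2norm (\<lambda>x. w r x - w s x)"
    by eventually_elim (use hs \<open>s \<in> {a..}\<close> in \<open>auto intro!: lipschitz heat_sol_sq_int\<close>)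
  moreover have "((\<lambda>r. L * l2norm (\<lambda>x. w r x - w s x)) \<longlongrightarrow> 0) (at s within {a..})"
    using heat_sol_tendsto_L2[OF hs] \<open>s \<in> {a..}\<close> tendsto_mult_right_zero by auto
  ultimately have "((\<lambda>r. F (w r) - F (w s)) \<longlongrightarrow> 0) (at s within {a..})"
    by (rule Lim_null_comparison)
  then show "((\<lambda>r. F (w r)) \<longlongrightarrow> F (w s)) (at s within {a..})"
    by (simp add: LIM_zero_iff)
qed

lemma continuous_on_l2norm_heat_sol:
  "heat_sol \<theta> lmb a U w \<Longrightarrow> continuous_on {a..} (\<lambda>s. l2norm (w s))"
  by (rule continuous_on_heat_sol_functional[where F = l2norm and L = 1]) (simp_all add: abs_l2norm_diff_le)

lemma continuous_on_sine_coeff_heat_sol: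
  "heat_sol \<theta> lmb a U w \<Longrightarrow> continuous_on {a..} (\<lambda>s. sine_coeff (w s) n)"
proof (rule continuous_on_heat_sol_functional[where F = "\<lambda>f. sine_coeff f n" and L = "l2norm (phi n)"])
  fix f g :: "real \<Rightarrow> real"
  assume "sq_int f" "sq_int g"
  then show "\<bar>sine_coeff f n - sine_coeff g n\<bar> \<le> l2norm (phi n) * l2norm (\<lambda>x. f x - g x)"
    by (simp add: sine_coeff_diff abs_sine_coeff_le sq_int_diff)
qed

lemma l2norm_le_Sup_heat_sol:
  assumes hs: "heat_sol \<theta> lmb a U w" and s: "s \<in> {a..t}"
  shows "l2norm (w s) \<le> Sup ((\<lambda>s. l2norm (w s)) ` {a..t})"
proof (rule cSup_upper)
  show "l2norm (w s) \<in> (\<lambda>s. l2norm (w s)) ` {a..t}"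
    using s by blast
  have "continuous_on {a..t} (\<lambda>s. l2norm (w s))"
    by (rule continuous_on_subset[OF continuous_on_l2norm_heat_sol[OF hs]]) auto
  then show "bdd_above ((\<lambda>s. l2norm (w s)) ` {a..t})"
    by (intro bounded_imp_bdd_above compact_imp_bounded compact_continuous_image) auto
qed

lemma has_real_derivative_sine_coeff:
  assumes w_t: "\<And>r x. a < r \<Longrightarrow> x \<in> {0..1} \<Longrightarrow> ((\<lambda>r. w r x) has_real_derivative w_t r x) (at r)"
    and w_t_cont: "continuous_on ({a<..} \<times> {0..1}) (\<lambda>p. w_t (fst p) (snd p))"
    and w_cont: "\<And>r. a < r \<Longrightarrow> continuous_on {0..1} (w r)"
    and "a < s"
  shows "((\<lambda>r. sine_coeff (w r) n) has_real_derivative sine_coeff (w_t s) n) (at s)"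
proof -
  have "((\<lambda>r. integral (cbox 0 1) (\<lambda>x. phi n x * w r x)) has_real_derivative
      integral (cbox 0 1) (\<lambda>x. phi n x * w_t s x)) (at s within {a<..})"
  proof (rule leibniz_rule_field_derivative)
    fix r x
    assume "r \<in> {a<..}" "x \<in> cbox (0::real) 1"
    then have "((\<lambda>r. w r x) has_real_derivative w_t r x) (at r)"
      using w_t by simp
    then show "((\<lambda>r. phi n x * w r x) has_real_derivative phi n x * w_t r x) (at r within {a<..})"
      by (rule has_field_derivative_at_within[OF DERIV_cmult])
  next
    fix r
    assume "r \<in> {a<..}"
    then show "(\<lambda>x. phi n x * w r x) integrable_on cbox 0 1"
      using w_cont[of r] by (auto intro!: integrable_continuous_real continuous_intros continuous_on_phi)
  next
    have "continuous_on ({a<..} \<times> {0..1}) (\<lambda>p. phi n (snd p))"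
      unfolding phi_def by (intro continuous_intros)
    then have "continuous_on ({a<..} \<times> {0..1}) (\<lambda>p. phi n (snd p) * w_t (fst p) (snd p))"
      by (rule continuous_on_mult[OF _ w_t_cont])
    then show "continuous_on ({a<..} \<times> cbox 0 1) (\<lambda>(r, x). phi n x * w_t r x)"
      by (simp add: case_prod_beta)
  qed (use \<open>a < s\<close> in auto)
  moreover have "at s within {a<..} = at s"
    using \<open>a < s\<close> by (intro at_within_open) auto
  ultimately show ?thesis
    by (simp add: sine_coeff_def)
qed

lemma has_real_derivative_sine_coeff_heat_sol:
  assumes hs: "heat_sol \<theta> lmb a U w" and "a < s"
  shows "((\<lambda>r. sine_coeff (w r) n) has_real_derivative
      - \<theta> * dphi n 1 * U - lam \<theta> lmb n * sine_coeff (w s) n) (at s)"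
proof -
  obtain wt wx wxx where
    wt_cont: "continuous_on ({a<..} \<times> {0..1}) (\<lambda>p. wt (fst p) (snd p))" and
    wt: "\<forall>t>a. \<forall>x\<in>{0..1}. ((\<lambda>s. w s x) has_real_derivative wt t x) (at t)" and
    wx: "\<forall>t>a. \<forall>x\<in>{0..1}. (w t has_real_derivative wx t x) (at x within {0..1})" and
    wxx: "\<forall>t>a. \<forall>x\<in>{0..1}. (wx t has_real_derivative wxx t x) (at x within {0..1})" and
    wxx_cont: "\<forall>t>a. continuous_on {0..1} (wxx t)" and
    pde: "\<forall>t>a. \<forall>x\<in>{0<..<1}. wt t x = \<theta> * wxx t x + lmb * w t x" and
    bc: "\<forall>t>a. w t 0 = 0 \<and> w t 1 = U"
    using hs unfolding heat_sol_def by blast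
  have w_cont: "continuous_on {0..1} (w r)" if "a < r" for r
    using wx that by (intro DERIV_continuous_on) blast
  have int_w: "(\<lambda>x. phi n x * w s x) integrable_on {0..1}"
    using w_cont[OF \<open>a < s\<close>] by (auto intro!: integrable_continuous_real continuous_intros continuous_on_phi)
  have int_wxx: "(\<lambda>x. phi n x * wxx s x) integrable_on {0..1}"
    using wxx_cont \<open>a < s\<close> by (auto intro!: integrable_continuous_real continuous_intros continuous_on_phi)
  have "sine_coeff (wt s) n
      = integral {0..1} (\<lambda>x. \<theta> * (phi n x * wxx s x) + lmb * (phi n x * w s x))"
    unfolding sine_coeff_def
    by (rule integral_spike[where S = "{0, 1}"]) (use pde \<open>a < s\<close> in \<open>auto simp: algebra_simps\<close>)
  also have "\<dots> = \<theta> * integral {0..1} (\<lambda>x. phi n x * wxx s x) + lmb * sine_coeff (w s) n"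
    using int_w int_wxx by (simp add: sine_coeff_def integral_add integrable_on_mult_left_real)
  also have "integral {0..1} (\<lambda>x. phi n x * wxx s x)
      = - dphi n 1 * w s 1 - (real n * pi)\<^sup>2 * sine_coeff (w s) n"
    by (rule integral_phi_mult_second_derivative[where w' = "wx s"])
      (use wx wxx wxx_cont bc \<open>a < s\<close> in auto)
  also have "\<theta> * (- dphi n 1 * w s 1 - (real n * pi)\<^sup>2 * sine_coeff (w s) n) + lmb * sine_coeff (w s) n
      = - \<theta> * dphi n 1 * U - lam \<theta> lmb n * sine_coeff (w s) n"
    using bc \<open>a < s\<close> by (simp add: lam_def algebra_simps power_mult_distrib)
  finally show ?thesis
    using has_real_derivative_sine_coeff[of a w wt s n] wt wt_cont w_cont \<open>a < s\<close> by simp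
qed

lemma sine_coeff_increment_le:
  assumes hs: "heat_sol \<theta> lmb a U w" and "a \<le> t" and "1 \<le> n"
  shows "\<bar>sine_coeff (w t) n - sine_coeff (w a) n\<bar>
    \<le> (t - a) * (\<bar>\<theta> * dphi n 1 * U\<bar> + \<bar>lam \<theta> lmb n\<bar> * Sup ((\<lambda>s. l2norm (w s)) ` {a..t}))"
    (is "_ \<le> (t - a) * ?B")
proof (cases "a = t")
  case False
  with \<open>a \<le> t\<close> have "a < t" by simp
  have "continuous_on {a..t} (\<lambda>s. sine_coeff (w s) n)"
    by (rule continuous_on_subset[OF continuous_on_sine_coeff_heat_sol[OF hs]]) auto
  moreover have "(\<lambda>s. sine_coeff (w s) n) differentiable (at z)" if "a < z" for z
    using has_real_derivative_sine_coeff_heat_sol[OF hs that] real_differentiable_def by blast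
  ultimately obtain l z where z: "a < z" "z < t"
    and l: "((\<lambda>s. sine_coeff (w s) n) has_real_derivative l) (at z)"
    and mvt: "sine_coeff (w t) n - sine_coeff (w a) n = (t - a) * l"
    using MVT[OF \<open>a < t\<close>] by blast
  have "l = - (\<theta> * dphi n 1 * U) - lam \<theta> lmb n * sine_coeff (w z) n"
    using DERIV_unique[OF l has_real_derivative_sine_coeff_heat_sol[OF hs \<open>a < z\<close>]] by simp
  then have "\<bar>l\<bar> \<le> \<bar>\<theta> * dphi n 1 * U\<bar> + \<bar>lam \<theta> lmb n\<bar> * \<bar>sine_coeff (w z) n\<bar>"
    using abs_triangle_ineq4[of "- (\<theta> * dphi n 1 * U)" "lam \<theta> lmb n * sine_coeff (w z) n"]
    by (simp add: abs_mult)
  also have "\<dots> \<le> ?B"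
    using abs_sine_coeff_le[OF heat_sol_sq_int[OF hs], of z n] l2norm_phi[OF \<open>1 \<le> n\<close>]
      l2norm_le_Sup_heat_sol[OF hs, of z t] z
    by (intro add_left_mono mult_left_mono) auto
  finally show ?thesis
    using mvt \<open>a < t\<close> by (simp add: abs_mult mult_left_mono)
qed simp

lemma sine_sum_increment_le:
  assumes hs: "heat_sol \<theta> lmb a U w" and "0 < \<theta>" and "a \<le> t"
  shows "\<bar>\<Sum>n=1..N. b n * (sine_coeff (w t) n - sine_coeff (w a) n)\<bar>
    \<le> (t - a) * \<theta> * \<bar>U\<bar> * (\<Sum>n=1..N. \<bar>b n * deriv (phi n) 1\<bar>)
      + (t - a) * (\<Sum>n=1..N. \<bar>b n * lam \<theta> lmb n\<bar>) * Sup ((\<lambda>s. l2norm (w s)) ` {a..t})"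
proof -
  define M where "M = Sup ((\<lambda>s. l2norm (w s)) ` {a..t})"
  have "\<bar>\<Sum>n=1..N. b n * (sine_coeff (w t) n - sine_coeff (w a) n)\<bar>
      \<le> (\<Sum>n=1..N. \<bar>b n\<bar> * ((t - a) * (\<bar>\<theta> * dphi n 1 * U\<bar> + \<bar>lam \<theta> lmb n\<bar> * M)))"
  proof (rule order_trans[OF sum_abs sum_mono])
    fix n
    assume "n \<in> {1..N}"
    then show "\<bar>b n * (sine_coeff (w t) n - sine_coeff (w a) n)\<bar>
        \<le> \<bar>b n\<bar> * ((t - a) * (\<bar>\<theta> * dphi n 1 * U\<bar> + \<bar>lam \<theta> lmb n\<bar> * M))"
      unfolding abs_mult[of "b n"] M_def
      by (intro mult_left_mono sine_coeff_increment_le[OF hs \<open>a \<le> t\<close>]) auto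
  qed
  also have "\<dots> = (\<Sum>n=1..N. (t - a) * \<theta> * \<bar>U\<bar> * \<bar>b n * deriv (phi n) 1\<bar>
      + (t - a) * M * \<bar>b n * lam \<theta> lmb n\<bar>)"
    using \<open>0 < \<theta>\<close> by (intro sum.cong) (simp_all add: deriv_phi abs_mult algebra_simps)
  also have "\<dots> = (t - a) * \<theta> * \<bar>U\<bar> * (\<Sum>n=1..N. \<bar>b n * deriv (phi n) 1\<bar>)
      + (t - a) * (\<Sum>n=1..N. \<bar>b n * lam \<theta> lmb n\<bar>) * M"
    by (simp add: sum.distrib sum_distrib_left mult_ac)
  finally show ?thesis
    unfolding M_def .
qed

lemma gain_increment_le:
  fixes k :: "real \<Rightarrow> real" and N :: nat
  assumes hs: "heat_sol \<theta> lmb a U w" and k: "sq_int k" and "0 < \<theta>" and "a \<le> t"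
  defines "kn \<equiv> \<lambda>n. integral {0..1} (\<lambda>y. k y * phi n y)"
    and "g \<equiv> \<lambda>y. \<Sum>n=1..N. integral {0..1} (\<lambda>y. k y * phi n y) * phi n y"
  shows "\<bar>integral {0..1} (\<lambda>y. k y * (w a y - w t y))\<bar>
    \<le> (t - a) * \<theta> * \<bar>U\<bar> * (\<Sum>n=1..N. \<bar>kn n * deriv (phi n) 1\<bar>)
      + (t - a) * (\<Sum>n=1..N. \<bar>kn n * lam \<theta> lmb n\<bar>) * Sup ((\<lambda>s. l2norm (w s)) ` {a..t})
      + l2norm (\<lambda>y. k y - g y) * l2norm (w a)
      + l2norm (\<lambda>y. k y - g y) * l2norm (w t)"
proof -
  have g_eq: "g = (\<lambda>y. \<Sum>n=1..N. kn n * phi n y)"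
    by (simp add: g_def kn_def)
  have wa: "sq_int (w a)" and wt: "sq_int (w t)"
    using heat_sol_sq_int[OF hs] \<open>a \<le> t\<close> by auto
  have wd: "sq_int (\<lambda>y. w a y - w t y)"
    by (rule sq_int_diff[OF wa wt])
  have g: "sq_int g"
    unfolding g_eq by (intro sq_int_continuous continuous_intros continuous_on_phi)
  have kg: "sq_int (\<lambda>y. k y - g y)"
    by (rule sq_int_diff[OF k g])
  have "integral {0..1} (\<lambda>y. k y * (w a y - w t y))
      = integral {0..1} (\<lambda>y. (k y - g y) * (w a y - w t y)) + integral {0..1} (\<lambda>y. g y * (w a y - w t y))"
    using integral_add[OF integrable_mult_sq_int[OF kg wd] integrable_mult_sq_int[OF g wd]]
    by (simp add: algebra_simps)
  moreover have "\<bar>integral {0..1} (\<lambda>y. (k y - g y) * (w a y - w t y))\<bar>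
      \<le> l2norm (\<lambda>y. k y - g y) * l2norm (w a) + l2norm (\<lambda>y. k y - g y) * l2norm (w t)"
    using integral_diff[OF integrable_mult_sq_int[OF kg wa] integrable_mult_sq_int[OF kg wt]]
      abs_integral_mult_le_l2norm[OF kg wa] abs_integral_mult_le_l2norm[OF kg wt]
    by (simp add: right_diff_distrib)
  moreover have "integral {0..1} (\<lambda>y. g y * (w a y - w t y))
      = (\<Sum>n=1..N. kn n * (sine_coeff (w a) n - sine_coeff (w t) n))"
    unfolding g_eq integral_sine_sum_mult[OF wd finite_atLeastAtMost] sine_coeff_diff[OF wa wt] ..
  then have "\<bar>integral {0..1} (\<lambda>y. g y * (w a y - w t y))\<bar>
      = \<bar>\<Sum>n=1..N. kn n * (sine_coeff (w t) n - sine_coeff (w a) n)\<bar>"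
    by (simp add: right_diff_distrib sum_subtractf)
  ultimately show ?thesis
    using sine_sum_increment_le[OF hs \<open>0 < \<theta>\<close> \<open>a \<le> t\<close>, of kn N] by linarith
qed

lemma kappa_pos:
  assumes "0 < \<theta>" and "\<theta> * pi\<^sup>2 \<le> lmb" and "0 \<le> c"
  shows "0 < kappa \<theta> lmb c"
proof -
  have "0 < \<theta> * pi\<^sup>2"
    using assms(1) by simp
  then have "0 < lmb + c"
    using assms(2,3) by linarith
  then show ?thesis
    using assms(1) by (simp add: kappa_def)
qed

lemma closed_loop_segment:
  assumes "closed_loop \<theta> lmb c \<beta> u0 u te" and "te j \<noteq> \<infinity>"
  obtains w where
    "heat_sol \<theta> lmb (real_of_ereal (te j))
       (integral {0..1} (\<lambda>y. kgain \<theta> lmb c y * w (real_of_ereal (te j)) y)) w"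
    and "\<And>s. real_of_ereal (te j) \<le> s \<Longrightarrow> ereal s < te (Suc j) \<Longrightarrow> u s = w s"
    and "te (Suc j) \<noteq> - \<infinity>"
proof -
  obtain w where w: "\<forall>j. te j \<noteq> \<infinity> \<longrightarrow>
      (let a = real_of_ereal (te j);
           k = kgain \<theta> lmb c;
           U = integral {0..1} (\<lambda>y. k y * w j a y);
           S = {t. t > a \<and>
                   \<bar>integral {0..1} (\<lambda>y. k y * (w j a y - w j t y))\<bar>
                     > \<beta> * l2norm k * l2norm (w j t) + \<beta> * l2norm k * l2norm (w j a)}
       in heat_sol \<theta> lmb a U (w j) \<and>
          (S = {} \<longrightarrow> te (Suc j) = \<infinity>) \<and>
          (S \<noteq> {} \<longrightarrow> te (Suc j) = ereal (Inf S)) \<and>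
          (\<forall>t. ereal a \<le> ereal t \<and> ereal t < te (Suc j) \<longrightarrow> u t = w j t) \<and>
          (te (Suc j) \<noteq> \<infinity> \<longrightarrow>
             w (Suc j) (real_of_ereal (te (Suc j))) = w j (real_of_ereal (te (Suc j)))))"
    using assms(1) unfolding closed_loop_def by blast
  show thesis
    using w[rule_format, OF assms(2)] unfolding Let_def
    by (intro that[of "w j"]) (auto split: if_splits)
qed

lemma closed_loop_event_time_real:
  assumes cl: "closed_loop \<theta> lmb c \<beta> u0 u te" and "te j \<noteq> \<infinity>"
  shows "te j = ereal (real_of_ereal (te j))"
proof (cases j)
  case 0
  then show ?thesis
    using cl by (simp add: closed_loop_def zero_ereal_def)
next
  case (Suc i)
  then have "te i \<noteq> \<infinity>"
    using cl \<open>te j \<noteq> \<infinity>\<close> by (auto simp: closed_loop_def)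
  then have "te j \<noteq> - \<infinity>"
    using closed_loop_segment[OF cl] Suc by metis
  with \<open>te j \<noteq> \<infinity>\<close> show ?thesis
    by (cases "te j") auto
qed

lemma closed_loop_between_events:
  assumes cl: "closed_loop \<theta> lmb c \<beta> u0 u te"
    and "te j \<noteq> \<infinity>" and "te j \<le> ereal t" and "ereal t < te (Suc j)"
  obtains w where
    "heat_sol \<theta> lmb (real_of_ereal (te j))
       (integral {0..1} (\<lambda>y. kgain \<theta> lmb c y * w (real_of_ereal (te j)) y)) w"
    and "real_of_ereal (te j) \<le> t"
    and "\<And>s. s \<in> {real_of_ereal (te j)..t} \<Longrightarrow> u s = w s"
proof -
  have "real_of_ereal (te j) \<le> t"
    using assms(3) closed_loop_event_time_real[OF cl assms(2)] by (metis ereal_less_eq(3))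
  moreover obtain w where
    "heat_sol \<theta> lmb (real_of_ereal (te j))
       (integral {0..1} (\<lambda>y. kgain \<theta> lmb c y * w (real_of_ereal (te j)) y)) w"
    and "\<And>s. real_of_ereal (te j) \<le> s \<Longrightarrow> ereal s < te (Suc j) \<Longrightarrow> u s = w s"
    using closed_loop_segment[OF cl assms(2)] by blast
  moreover have "ereal s < te (Suc j)" if "s \<le> t" for s
    using assms(4) that by (meson ereal_less_eq(3) le_less_trans)
  ultimately show thesis
    using that by auto
qed

theorem mainTheorem2:
  fixes \<theta> lmb c \<beta> t :: real and u0 :: "real \<Rightarrow> real" and u :: "real \<Rightarrow> real \<Rightarrow> real"
    and te :: "nat \<Rightarrow> ereal" and N j :: nat
  assumes "\<theta> > 0" and "lmb \<ge> \<theta> * pi\<^sup>2" and "c \<ge> 0" and "\<beta> > 0"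
    and "sq_int u0"
    and "closed_loop \<theta> lmb c \<beta> u0 u te"
    and "N \<ge> 1"
    and "te j \<noteq> \<infinity>" and "te j \<le> ereal t" and "ereal t < te (Suc j)"
  shows "\<bar>integral {0..1} (\<lambda>y. kgain \<theta> lmb c y * (u (real_of_ereal (te j)) y - u t y))\<bar>
    \<le> (t - real_of_ereal (te j)) * \<theta> * l2norm (kgain \<theta> lmb c) * FN \<theta> lmb c N
          * l2norm (u (real_of_ereal (te j)))
      + (t - real_of_ereal (te j)) * GN \<theta> lmb c N
          * Sup ((\<lambda>s. l2norm (u s)) ` {real_of_ereal (te j)..t})
      + l2norm (\<lambda>y. kgain \<theta> lmb c y - gN \<theta> lmb c N y) * l2norm (u (real_of_ereal (te j)))
      + l2norm (\<lambda>y. kgain \<theta> lmb c y - gN \<theta> lmb c N y) * l2norm (u t)"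
proof -
  define a where "a = real_of_ereal (te j)"
  define k where "k = kgain \<theta> lmb c"
  obtain w where hs: "heat_sol \<theta> lmb a (integral {0..1} (\<lambda>y. k y * w a y)) w"
    and "a \<le> t" and u_eq: "\<And>s. s \<in> {a..t} \<Longrightarrow> u s = w s"
    using closed_loop_between_events[OF assms(6,8-10)] unfolding a_def k_def by blast
  have k: "sq_int k"
    unfolding k_def using assms(1-3) by (intro sq_int_kgain kappa_pos)
  have "\<bar>integral {0..1} (\<lambda>y. k y * w a y)\<bar> * FN \<theta> lmb c N \<le> l2norm k * l2norm (w a) * FN \<theta> lmb c N"
    using abs_integral_mult_le_l2norm[OF k heat_sol_sq_int[OF hs order_refl]]
    by (intro mult_right_mono) (simp_all add: FN_def sum_nonneg)
  then have "(t - a) * \<theta> * (\<bar>integral {0..1} (\<lambda>y. k y * w a y)\<bar> * FN \<theta> lmb c N)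
      \<le> (t - a) * \<theta> * (l2norm k * l2norm (w a) * FN \<theta> lmb c N)"
    using \<open>a \<le> t\<close> assms(1) by (intro mult_left_mono) auto
  moreover have "(\<lambda>s. l2norm (u s)) ` {a..t} = (\<lambda>s. l2norm (w s)) ` {a..t}"
    by (rule image_cong) (simp_all add: u_eq)
  ultimately show ?thesis
    using gain_increment_le[OF hs k assms(1) \<open>a \<le> t\<close>, of N] u_eq[of a] u_eq[of t] \<open>a \<le> t\<close>
    unfolding a_def[symmetric] k_def[symmetric] FN_def GN_def gN_def kcoef_def
    by (simp add: mult_ac)
qed

end
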